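(* Let $T$ be a path forest of order $m^2$ that is impossibly burnable. Then the burning number of $T$ is greater than $m$; that is, $T$ is not well-burnable.
   Context: Graph burning on a finite simple graph $G$: initially all vertices are unburned. In each round $t\ge1$, first every unburned neighbour of a vertex that was burned by the end of round $t-1$ becomes burned, and a burning source is placed on (and burns) one unburned vertex; burned vertices stay burned. The burning number of $G$ is the least number of rounds after which all vertices are burned. A graph of order $N$ is well-burnable if its burning number is at most $\lceil\sqrt N\rceil$. A path forest is a disjoint union of paths, represented by the tuple $(l_1,\dots,l_n)$ of path orders. For $m\in\mathbb{N}$ and an integer $1\le l\le m^2$, let $B_m(l)$ be the least positive integer $t$ with $t\equiv l\pmod 2$ such that $l\le 2mt-t^2$. A path forest $(l_1,\dots,l_n)$ of order $m^2$ is impossibly burnable if $\sum_{i=1}^n B_m(l_i)>m$. *)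

theory Defs
  imports Complex_Main
begin

text \<open>A burning process is a list of rounds; in round t, first the fire
spreads from the set B of vertices burned by the end of round t-1 to all their
neighbours, then a burning source is placed on one unburned vertex (Some v).\<close>

definition spread :: "('a \<Rightarrow> 'a \<Rightarrow> bool) \<Rightarrow> 'a set \<Rightarrow> 'a set" where
  "spread E B = B \<union> {v. \<exists>u\<in>B. E u v}"

definition valid_source :: "'a set \<Rightarrow> 'a set \<Rightarrow> 'a option \<Rightarrow> bool" where
  "valid_source V C s = (case s of None \<Rightarrow> V \<subseteq> C | Some v \<Rightarrow> v \<in> V \<and> v \<notin> C)"

primrec burn_ok :: "'a set \<Rightarrow> ('a \<Rightarrow> 'a \<Rightarrow> bool) \<Rightarrow> 'a set \<Rightarrow> 'a option list \<Rightarrow> bool" where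
  "burn_ok V E B [] = True"
| "burn_ok V E B (s # ss) =
     (valid_source V (spread E B) s \<and> burn_ok V E (spread E B \<union> set_option s) ss)"

primrec burned :: "('a \<Rightarrow> 'a \<Rightarrow> bool) \<Rightarrow> 'a set \<Rightarrow> 'a option list \<Rightarrow> 'a set" where
  "burned E B [] = B"
| "burned E B (s # ss) = burned E (spread E B \<union> set_option s) ss"

definition burning_number :: "'a set \<Rightarrow> ('a \<Rightarrow> 'a \<Rightarrow> bool) \<Rightarrow> nat" where
  "burning_number V E = (LEAST k. \<exists>ss. length ss = k \<and> burn_ok V E {} ss \<and> V \<subseteq> burned E {} ss)"

definition well_burnable :: "'a set \<Rightarrow> ('a \<Rightarrow> 'a \<Rightarrow> bool) \<Rightarrow> bool" where
  "well_burnable V E \<longleftrightarrow> burning_number V E \<le> nat \<lceil>sqrt (real (card V))\<rceil>"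

text \<open>The path forest (l_1,...,l_n) (list ls): vertex (i,j) is the j-th vertex
of the i-th path, 0-indexed; consecutive vertices of a path are adjacent.\<close>

definition pf_vertices :: "nat list \<Rightarrow> (nat \<times> nat) set" where
  "pf_vertices ls = {(i, j). i < length ls \<and> j < ls ! i}"

definition pf_edge :: "nat list \<Rightarrow> nat \<times> nat \<Rightarrow> nat \<times> nat \<Rightarrow> bool" where
  "pf_edge ls x y \<longleftrightarrow> x \<in> pf_vertices ls \<and> y \<in> pf_vertices ls \<and>
     fst x = fst y \<and> (snd y = snd x + 1 \<or> snd x = snd y + 1)"

definition B_m :: "nat \<Rightarrow> nat \<Rightarrow> nat" where
  "B_m m l = (LEAST t. 0 < t \<and> t mod 2 = l mod 2 \<and>
                 int l \<le> 2 * int m * int t - int t ^ 2)"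

definition impossibly_burnable :: "nat \<Rightarrow> nat list \<Rightarrow> bool" where
  "impossibly_burnable m ls \<longleftrightarrow>
     (\<forall>l\<in>set ls. 1 \<le> l) \<and> sum_list ls = m ^ 2 \<and> (\<Sum>l\<leftarrow>ls. B_m m l) > m"

end

theory Submission
  imports Defs
begin

text \<open>After k rounds, the source placed in round k - u has burned only vertices of its
own path within distance u of it, so its burned set is an interval of at most 2u + 1 vertices;
the radii u of different sources are distinct numbers below k. If k \<le> m, the odd numbers
2u + 1 over distinct u < m add up to at most m^2, the order of the forest, so each path
of order l is covered exactly by the intervals of its s sources: l = \<Sum>(2u + 1) has the
parity of s, and l \<le> 2ms - s^2 because the largest possible value of that sum is the sum
of the s largest odd numbers below 2m. Hence B_m(l) \<le> s, and summing over the paths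
gives \<Sum> B_m(l_i) \<le> k \<le> m.\<close>

lemma sum_odd_plus_square_le_square:
  fixes U :: "nat set"
  assumes "U \<subseteq> {..<m}"
  shows "(\<Sum>u\<in>U. 2*u+1) + (m - card U)^2 \<le> m^2"
  using assms
proof (induction m arbitrary: U)
  case 0
  then show ?case by simp
next
  case (Suc m)
  have fin: "finite U" using Suc.prems finite_subset by blast
  have sq: "(Suc x)^2 = x^2 + 2*x + 1" for x :: nat by (simp add: power2_eq_square)
  show ?case
  proof (cases "m \<in> U")
    case True
    have IH: "(\<Sum>u\<in>U - {m}. 2*u+1) + (m - card (U - {m}))^2 \<le> m^2"
      using Suc.prems by (intro Suc.IH) auto
    have "(\<Sum>u\<in>U. 2*u+1) = (2*m+1) + (\<Sum>u\<in>U - {m}. 2*u+1)"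
      using sum.remove[OF fin True, of "\<lambda>u. 2*u+1"] by simp
    moreover have "card U = Suc (card (U - {m}))" using card.remove[OF fin True] .
    ultimately show ?thesis using IH sq[of m] by simp
  next
    case False
    then have sub: "U \<subseteq> {..<m}" using Suc.prems by (force simp: less_Suc_eq)
    have "card U \<le> m" using card_mono[OF _ sub] by simp
    then have "(Suc m - card U)^2 = (m - card U)^2 + 2*(m - card U) + 1"
      using sq by (simp add: Suc_diff_le)
    then show ?thesis using Suc.IH[OF sub] sq[of m] \<open>card U \<le> m\<close> by simp
  qed
qed

lemma B_m_le:
  assumes "0 < s" and "s \<le> m" and "s mod 2 = l mod 2" and "l + (m - s)^2 \<le> m^2"
  shows "B_m m l \<le> s"
proof -
  have "int l + (int m - int s)^2 \<le> (int m)^2"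
    using assms(2,4) by (simp flip: of_nat_diff of_nat_power of_nat_add)
  then have "int l \<le> 2 * int m * int s - int s ^ 2" by (simp add: power2_diff)
  then show ?thesis unfolding B_m_def using assms(1,3) by (intro Least_le) auto
qed

lemma B_m_sum_odd_le_card:
  assumes "X \<subseteq> {..<m}" and "1 \<le> (\<Sum>u\<in>X. 2*u+1)"
  shows "B_m m (\<Sum>u\<in>X. 2*u+1) \<le> card X"
proof (rule B_m_le)
  have fin: "finite X" using assms(1) finite_subset by blast
  show "0 < card X" using assms(2) fin by (cases "X = {}") (auto simp: card_gt_0_iff)
  show "card X \<le> m" using card_mono[OF _ assms(1)] by simp
  have "(\<Sum>u\<in>X. 2*u+1) = 2 * (\<Sum>u\<in>X. u) + card X"
    unfolding sum.distrib by (simp add: sum_distrib_left)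
  then show "card X mod 2 = (\<Sum>u\<in>X. 2*u+1) mod 2" by simp
  show "(\<Sum>u\<in>X. 2*u+1) + (m - card X)^2 \<le> m^2"
    using sum_odd_plus_square_le_square[OF assms(1)] .
qed

lemma sum_B_m_le_of_disjoint_cover:
  fixes R :: "nat \<Rightarrow> nat set"
  assumes pos: "\<forall>l\<in>set ls. 1 \<le> l"
    and total: "sum_list ls = m^2"
    and radii: "\<And>i. i < length ls \<Longrightarrow> R i \<subseteq> {..<m}"
    and disj: "\<And>i j. i < length ls \<Longrightarrow> j < length ls \<Longrightarrow> i \<noteq> j \<Longrightarrow> R i \<inter> R j = {}"
    and cover: "\<And>i. i < length ls \<Longrightarrow> ls ! i \<le> (\<Sum>u\<in>R i. 2*u+1)"
  shows "(\<Sum>l\<leftarrow>ls. B_m m l) \<le> m"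
proof -
  let ?n = "length ls" and ?c = "\<lambda>i. \<Sum>u\<in>R i. 2*u+1"
  have fin: "\<forall>i\<in>{..<?n}. finite (R i)" using radii finite_subset by blast
  have disj': "\<forall>i\<in>{..<?n}. \<forall>j\<in>{..<?n}. i \<noteq> j \<longrightarrow> R i \<inter> R j = {}" using disj by blast
  have union: "(\<Union>i<?n. R i) \<subseteq> {..<m}" using radii by blast
  have "(\<Sum>i<?n. ?c i) = (\<Sum>u\<in>(\<Union>i<?n. R i). 2*u+1)"
    using sum.UNION_disjoint[OF _ fin disj', of "\<lambda>u. 2*u+1"] by simp
  also have "\<dots> \<le> m^2" using sum_odd_plus_square_le_square[OF union] by simp
  finally have csum: "(\<Sum>i<?n. ?c i) \<le> m^2" .
  have lsum: "(\<Sum>i<?n. ls ! i) = m^2"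
    using total by (simp add: sum_list_sum_nth atLeast0LessThan)
  have exact: "ls ! i = ?c i" if "i < ?n" for i
  proof (rule ccontr)
    assume "ls ! i \<noteq> ?c i"
    then have "ls ! i < ?c i" using cover[OF that] by simp
    then have "(\<Sum>i<?n. ls ! i) < (\<Sum>i<?n. ?c i)"
      using cover that by (intro sum_strict_mono_ex1) auto
    then show False using csum lsum by simp
  qed
  have "(\<Sum>l\<leftarrow>ls. B_m m l) = (\<Sum>i<?n. B_m m (ls ! i))"
    by (simp add: sum_list_sum_nth atLeast0LessThan)
  also have "\<dots> \<le> (\<Sum>i<?n. card (R i))"
  proof (rule sum_mono)
    fix i assume i: "i \<in> {..<?n}"
    then have "1 \<le> ?c i" using pos exact by (metis lessThan_iff nth_mem)
    then show "B_m m (ls ! i) \<le> card (R i)"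
      using B_m_sum_odd_le_card radii i exact by simp
  qed
  also have "\<dots> = card (\<Union>i<?n. R i)" using card_UN_disjoint[OF _ fin disj'] by simp
  also have "\<dots> \<le> m" using card_mono[OF _ union] by simp
  finally show ?thesis .
qed

definition same_path_within :: "nat \<Rightarrow> nat \<times> nat \<Rightarrow> nat \<times> nat \<Rightarrow> bool" where
  "same_path_within r a w \<longleftrightarrow> fst w = fst a \<and> snd w \<le> snd a + r \<and> snd a \<le> snd w + r"

lemma same_path_within_trans:
  "same_path_within r a b \<Longrightarrow> same_path_within r' b c \<Longrightarrow> same_path_within (r + r') a c"
  unfolding same_path_within_def by auto

lemma same_path_within_refl: "same_path_within r a a"
  by (simp add: same_path_within_def)

lemma spread_pf_edge_within:
  assumes "a \<in> spread (pf_edge ls) B"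
  shows "\<exists>b\<in>B. same_path_within 1 b a"
proof -
  have "a \<in> B \<or> (\<exists>b\<in>B. pf_edge ls b a)" using assms by (auto simp: spread_def)
  then show ?thesis
  proof
    assume "a \<in> B"
    then show ?thesis using same_path_within_refl by blast
  next
    assume "\<exists>b\<in>B. pf_edge ls b a"
    then obtain b where "b \<in> B" "pf_edge ls b a" by blast
    moreover have "same_path_within 1 b a"
      using \<open>pf_edge ls b a\<close> unfolding pf_edge_def same_path_within_def by auto
    ultimately show ?thesis by blast
  qed
qed

text \<open>Indexing the schedule from the end, rev ss ! u is the source placed u rounds before the
last one, so its fire has spread u steps.\<close>

lemma burned_pf_edge_within:
  assumes "w \<in> burned (pf_edge ls) B ss"
  shows "(\<exists>a\<in>B. same_path_within (length ss) a w) \<or>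
         (\<exists>u<length ss. \<exists>v. rev ss ! u = Some v \<and> same_path_within u v w)"
  using assms
proof (induction ss arbitrary: B)
  case Nil
  then show ?case by (auto intro: same_path_within_refl)
next
  case (Cons s ss)
  let ?B' = "spread (pf_edge ls) B \<union> set_option s"
  have rev_nth: "rev (s # ss) ! u = rev ss ! u" if "u < length ss" for u
    using that by (simp add: nth_append)
  from Cons.prems have "w \<in> burned (pf_edge ls) ?B' ss" by simp
  from Cons.IH[OF this] show ?case
  proof
    assume "\<exists>a\<in>?B'. same_path_within (length ss) a w"
    then obtain a where a: "a \<in> ?B'" "same_path_within (length ss) a w" by blast
    show ?case
    proof (cases "a \<in> spread (pf_edge ls) B")
      case True
      then obtain b where b: "b \<in> B" "same_path_within 1 b a" using spread_pf_edge_within by blast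
      have "same_path_within (1 + length ss) b w" using same_path_within_trans[OF b(2) a(2)] .
      then show ?thesis using b(1) by auto
    next
      case False
      then have "rev (s # ss) ! length ss = Some a" using a(1) by (auto simp: nth_append)
      then show ?thesis using a(2) by (intro disjI2 exI[of _ "length ss"]) auto
    qed
  next
    assume "\<exists>u<length ss. \<exists>v. rev ss ! u = Some v \<and> same_path_within u v w"
    then obtain u v where "u < length ss" "rev ss ! u = Some v" "same_path_within u v w"
      by blast
    then show ?case using rev_nth by (intro disjI2 exI[of _ u]) auto
  qed
qed

definition source_radii :: "(nat \<times> nat) option list \<Rightarrow> nat \<Rightarrow> nat set" where
  "source_radii ss i = {u. u < length ss \<and> (\<exists>v. rev ss ! u = Some v \<and> fst v = i)}"

lemma source_radii_disjoint: "i \<noteq> j \<Longrightarrow> source_radii ss i \<inter> source_radii ss j = {}"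
  by (auto simp: source_radii_def)

lemma path_order_le_source_cover:
  assumes cov: "pf_vertices ls \<subseteq> burned (pf_edge ls) {} ss" and i: "i < length ls"
  shows "ls ! i \<le> (\<Sum>u\<in>source_radii ss i. 2*u+1)"
proof -
  let ?R = "source_radii ss i"
  define center where "center u = snd (the (rev ss ! u))" for u
  define J where "J u = {center u - u .. center u + u}" for u
  have fin: "finite ?R" by (simp add: source_radii_def)
  have "{..<ls ! i} \<subseteq> (\<Union>u\<in>?R. J u)"
  proof
    fix j assume "j \<in> {..<ls ! i}"
    then have "(i, j) \<in> burned (pf_edge ls) {} ss" using cov i by (auto simp: pf_vertices_def)
    then obtain u v where u: "u < length ss" "rev ss ! u = Some v" "same_path_within u v (i, j)"
      using burned_pf_edge_within[of "(i, j)" ls "{}" ss] by auto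
    then have "fst v = i" by (simp add: same_path_within_def)
    then have "u \<in> ?R" using u(1,2) unfolding source_radii_def by blast
    moreover have "j \<in> J u" using u by (auto simp: same_path_within_def center_def J_def)
    ultimately show "j \<in> (\<Union>u\<in>?R. J u)" by blast
  qed
  then have "card {..<ls ! i} \<le> card (\<Union>u\<in>?R. J u)"
    by (intro card_mono) (auto simp: J_def fin)
  also have "\<dots> \<le> (\<Sum>u\<in>?R. card (J u))" by (rule card_UN_le[OF fin])
  also have "\<dots> \<le> (\<Sum>u\<in>?R. 2*u+1)" by (intro sum_mono) (auto simp: J_def)
  finally show ?thesis by simp
qed

lemma burning_schedule_longer:
  assumes pos: "\<forall>l\<in>set ls. 1 \<le> l"
    and total: "sum_list ls = m^2"
    and many: "m < (\<Sum>l\<leftarrow>ls. B_m m l)"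
    and cov: "pf_vertices ls \<subseteq> burned (pf_edge ls) {} ss"
  shows "m < length ss"
proof (rule ccontr)
  assume "\<not> m < length ss"
  then have "(\<Sum>l\<leftarrow>ls. B_m m l) \<le> m"
    by (intro sum_B_m_le_of_disjoint_cover[OF pos total, where R = "source_radii ss"]
        source_radii_disjoint path_order_le_source_cover[OF cov])
      (auto simp: source_radii_def)
  with many show False by simp
qed

lemma burning_schedule_exists:
  assumes "finite V"
  shows "\<exists>ss. burn_ok V E B ss \<and> V \<subseteq> burned E B ss"
  using assms
proof (induction "card (V - B)" arbitrary: B rule: less_induct)
  case less
  show ?case
  proof (cases "V \<subseteq> spread E B")
    case True
    then have "burn_ok V E B [None] \<and> V \<subseteq> burned E B [None]" by (simp add: valid_source_def)
    then show ?thesis by blast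
  next
    case False
    then obtain v where v: "v \<in> V" "v \<notin> spread E B" by auto
    define B' where "B' = spread E B \<union> {v}"
    have "B \<subseteq> spread E B" by (auto simp: spread_def)
    then have "V - B' \<subset> V - B" using v unfolding B'_def by auto
    then have "card (V - B') < card (V - B)"
      by (rule psubset_card_mono[rotated]) (use less.prems in auto)
    then obtain ss where "burn_ok V E B' ss \<and> V \<subseteq> burned E B' ss"
      using less.hyps less.prems by blast
    then have "burn_ok V E B (Some v # ss) \<and> V \<subseteq> burned E B (Some v # ss)"
      using v by (simp add: valid_source_def B'_def)
    then show ?thesis by blast
  qed
qed

lemma burning_number_attained:
  assumes "finite V"
  obtains ss where "length ss = burning_number V E" "burn_ok V E {} ss" "V \<subseteq> burned E {} ss"
proof -
  have "\<exists>k ss. length ss = k \<and> burn_ok V E {} ss \<and> V \<subseteq> burned E {} ss"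
    using burning_schedule_exists[OF assms] by blast
  from LeastI_ex[OF this] show ?thesis
    using that unfolding burning_number_def by blast
qed

lemma pf_vertices_Sigma: "pf_vertices ls = Sigma {..<length ls} (\<lambda>i. {..<ls ! i})"
  by (auto simp: pf_vertices_def)

lemma card_pf_vertices: "card (pf_vertices ls) = sum_list ls"
  by (simp add: pf_vertices_Sigma card_SigmaI sum_list_sum_nth atLeast0LessThan)

theorem mainTheorem2:
  fixes m :: nat and ls :: "nat list"
  assumes "\<forall>l\<in>set ls. 1 \<le> l"
    and "sum_list ls = m ^ 2"
    and "impossibly_burnable m ls"
  shows "m < burning_number (pf_vertices ls) (pf_edge ls) \<and>
         \<not> well_burnable (pf_vertices ls) (pf_edge ls)"
proof -
  let ?V = "pf_vertices ls" and ?E = "pf_edge ls"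
  have "finite ?V" by (simp add: pf_vertices_Sigma)
  then obtain ss where len: "length ss = burning_number ?V ?E" and cov: "?V \<subseteq> burned ?E {} ss"
    by (rule burning_number_attained)
  have lt: "m < burning_number ?V ?E"
    using burning_schedule_longer[OF assms(1,2) _ cov] assms(3) len
    by (simp add: impossibly_burnable_def)
  have "nat \<lceil>sqrt (real (card ?V))\<rceil> = m" using assms(2) by (simp add: card_pf_vertices)
  then show ?thesis using lt unfolding well_burnable_def by simp
qed

end
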